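(* Let $q$ be a power of an odd prime, $r\ge1$ an integer, and $\mu\in\mathbb{F}_q$ such that $x^{2r+1}-\mu$ is irreducible in $\mathbb{F}_q[x]$. Then the number of $(z_0,\dots,z_{2r})\in\mathbb{F}_q^{2r+1}$ satisfying the system of $2r+1$ equations \[ \mu z_{l+r}^2+2\sum_{\{i,j\}\in U_{2l-1}}\mu_{\{i,j\}}z_iz_j=0\quad(1\le l\le r), \qquad z_l^2+2\sum_{\{i,j\}\in U_{2l}}\mu_{\{i,j\}}z_iz_j=0\quad(0\le l\le r), \] is at most $\frac{2r+5}{3}\,q^{\frac{4r}{3}+1}$.
   Context: For $0\le k\le 2r$, $U_k$ is the set of $2$-element subsets $\{i,j\}\subset\{0,1,\dots,2r\}$ (so $i\ne j$) with $i+j\equiv k\pmod{2r+1}$. For such a subset, $\mu_{\{i,j\}}=1$ if $1\le i+j\le 2r$ and $\mu_{\{i,j\}}=\mu$ if $2r+1\le i+j\le 4r-1$. *)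

theory Defs
  imports Complex_Main "HOL-Computational_Algebra.Computational_Algebra"
begin

definition U :: "nat \<Rightarrow> nat \<Rightarrow> nat set set" where
  "U r k = {{i, j} | i j. i \<le> 2*r \<and> j \<le> 2*r \<and> i \<noteq> j \<and> (i + j) mod (2*r+1) = k}"

definition muc :: "nat \<Rightarrow> 'a::field \<Rightarrow> nat set \<Rightarrow> 'a" where
  "muc r \<mu> s = (if 1 \<le> \<Sum>s \<and> \<Sum>s \<le> 2*r then 1 else \<mu>)"

end

theory Submission
  imports Defs
begin

(* Put n = 2r+1 and attach to z = (z_0,...,z_2r) the polynomial
   P = z_0 + z_1 x + ... + z_2r x^2r.  Reducing P^2 modulo x^n - mu (via x^n == mu) gives
   a polynomial of degree < n whose coefficient of x^k is the "folded" sum over all ordered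
   pairs (i,j) with i + j == k (mod n), weighted by mu when i + j >= n.  Splitting this sum
   into its diagonal term and twice the sum over the unordered pairs U_k shows that the k-th
   equation of the system says exactly that this coefficient vanishes.  Hence every solution
   satisfies (x^n - mu) | P^2.  When x^n - mu is irreducible it is prime in F_q[x], so it
   divides P, and deg P < n forces P = 0.  Thus the zero vector is the only solution and the
   stated bound (which is >= 1) holds trivially. *)

text \<open>Weight picked up by the monomial x^m, for m < 2n, when reduced modulo x^n - mu.\<close>
definition fold_weight :: "nat \<Rightarrow> 'a::field \<Rightarrow> nat \<Rightarrow> 'a" where
  "fold_weight n \<mu> m = (if m < n then 1 else \<mu>)"

text \<open>Coefficient of x^k in the reduction of (sum_{i<n} z_i x^i)^2 modulo x^n - mu.\<close>
definition folded_coeff :: "nat \<Rightarrow> 'a::field \<Rightarrow> (nat \<Rightarrow> 'a) \<Rightarrow> nat \<Rightarrow> 'a" where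
  "folded_coeff n \<mu> z k =
     (\<Sum>(i,j)\<in>{(i,j). i < n \<and> j < n \<and> (i+j) mod n = k}. fold_weight n \<mu> (i+j) * z i * z j)"

lemma monom_fold_dvd:
  fixes \<mu> a :: "'a::field"
  assumes "m < 2*n"
  shows "(monom 1 n - [:\<mu>:]) dvd (monom a m - monom (fold_weight n \<mu> m * a) (m mod n))"
proof (cases "m < n")
  case True
  then show ?thesis by (simp add: fold_weight_def)
next
  case False
  define t where "t = m - n"
  have t: "m = t + n" "t < n"
    using False assms by (simp_all add: t_def)
  have "monom a m - monom (\<mu> * a) t = (monom 1 n - [:\<mu>:]) * monom a t"
    by (simp add: t(1) algebra_simps mult_monom monom_0[symmetric] del: monom_0)
  then show ?thesis
    using False t by (simp add: fold_weight_def)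
qed

lemma square_fold_dvd:
  fixes \<mu> :: "'a::field" and z :: "nat \<Rightarrow> 'a" and n :: nat
  defines "P \<equiv> \<Sum>i<n. monom (z i) i"
  shows "(monom 1 n - [:\<mu>:]) dvd P * P - (\<Sum>k<n. monom (folded_coeff n \<mu> z k) k)"
proof -
  define A where "A = {..<n} \<times> {..<n}"
  define R where "R = (\<Sum>(i,j)\<in>A. monom (fold_weight n \<mu> (i+j) * (z i * z j)) ((i+j) mod n))"
  have square: "P * P = (\<Sum>(i,j)\<in>A. monom (z i * z j) (i+j))"
    unfolding P_def A_def sum_product by (simp add: mult_monom sum.cartesian_product)
  have "R = (\<Sum>k<n. monom (folded_coeff n \<mu> z k) k)"
  proof (rule poly_eqI)
    fix k
    have "coeff R k = (\<Sum>(i,j)\<in>A. if (i+j) mod n = k then fold_weight n \<mu> (i+j) * z i * z j else 0)"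
      unfolding R_def coeff_sum by (rule sum.cong) (auto simp: coeff_monom mult.assoc)
    also have "\<dots> = sum (\<lambda>(i,j). fold_weight n \<mu> (i+j) * z i * z j)
                        {x\<in>A. (fst x + snd x) mod n = k}"
      unfolding A_def case_prod_beta by (rule sum.inter_filter[symmetric]) simp
    also have "\<dots> = (if k < n then folded_coeff n \<mu> z k else 0)"
    proof (cases "k < n")
      case True
      have "{x\<in>A. (fst x + snd x) mod n = k} = {(i,j). i < n \<and> j < n \<and> (i+j) mod n = k}"
        unfolding A_def by auto
      then show ?thesis using True by (simp add: folded_coeff_def)
    next
      case False
      then have "{x\<in>A. (fst x + snd x) mod n = k} = {}"
        unfolding A_def by auto
      then show ?thesis using False by (simp only: False sum.empty if_False)
    qed
    also have "\<dots> = coeff (\<Sum>k<n. monom (folded_coeff n \<mu> z k) k) k"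
      by (simp add: coeff_sum coeff_monom)
    finally show "coeff R k = coeff (\<Sum>k<n. monom (folded_coeff n \<mu> z k) k) k" .
  qed
  moreover have "(monom 1 n - [:\<mu>:]) dvd P * P - R"
    unfolding square R_def sum_subtractf[symmetric] case_prod_beta
    by (rule dvd_sum) (auto simp: A_def intro: monom_fold_dvd)
  ultimately show ?thesis by simp
qed

lemma poly_zero_if_irreducible_dvd_square:
  fixes p P :: "'a::field poly"
  assumes "irreducible p" and "p dvd P * P" and "degree P < degree p"
  shows "P = 0"
proof (rule ccontr)
  assume "P \<noteq> 0"
  have "prime_elem p" using assms(1) by (rule field_poly_irreducible_imp_prime)
  then have "p dvd P" using assms(2) prime_elem_dvd_mult_iff by blast
  then have "degree p \<le> degree P" using \<open>P \<noteq> 0\<close> by (rule dvd_imp_degree_le)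
  with assms(3) show False by simp
qed

lemma U_eq_increasing_pairs:
  "U r k = (\<lambda>(i,j). {i,j}) ` {(i,j). i < j \<and> j < 2*r+1 \<and> (i+j) mod (2*r+1) = k}"
  (is "_ = _ ` ?L")
proof (intro equalityI subsetI)
  fix s assume "s \<in> U r k"
  then obtain i j where s: "s = {i,j}" "i \<le> 2*r" "j \<le> 2*r" "i \<noteq> j" "(i+j) mod (2*r+1) = k"
    unfolding U_def by auto
  have "min i j < max i j" "min i j + max i j = i + j" "max i j < 2*r+1"
    using s by (auto simp: min_def max_def)
  with s have "(min i j, max i j) \<in> ?L" by simp
  moreover have "s = (\<lambda>(i,j). {i,j}) (min i j, max i j)" using s by (auto simp: min_def max_def)
  ultimately show "s \<in> (\<lambda>(i,j). {i,j}) ` ?L" by (rule rev_image_eqI)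
next
  fix s assume "s \<in> (\<lambda>(i,j). {i,j}) ` ?L"
  then obtain a b where "s = {a,b}" "a < b" "b < 2*r+1" "(a+b) mod (2*r+1) = k"
    by auto
  then show "s \<in> U r k" unfolding U_def by (intro CollectI exI[of _ a] exI[of _ b]) auto
qed

lemma folded_coeff_split:
  fixes z :: "nat \<Rightarrow> 'a::field"
  shows "folded_coeff (2*r+1) \<mu> z k
       = (\<Sum>i\<in>{i. i \<le> 2*r \<and> (2*i) mod (2*r+1) = k}. fold_weight (2*r+1) \<mu> (2*i) * z i * z i)
         + 2 * (\<Sum>s\<in>U r k. muc r \<mu> s * (\<Prod>i\<in>s. z i))"
proof -
  define f where "f = (\<lambda>(i,j). fold_weight (2*r+1) \<mu> (i+j) * z i * z j)"
  define S where "S = {(i,j). i < 2*r+1 \<and> j < 2*r+1 \<and> (i+j) mod (2*r+1) = k}"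
  define D where "D = {x\<in>S. fst x = snd x}"
  define L where "L = {(i,j). i < j \<and> j < 2*r+1 \<and> (i+j) mod (2*r+1) = k}"
  define G where "G = {x\<in>S. fst x > snd x}"
  have "finite S"
    unfolding S_def by (rule finite_subset[of _ "{..<2*r+1} \<times> {..<2*r+1}"]) auto
  moreover have "L \<subseteq> S" unfolding L_def S_def by auto
  ultimately have fin: "finite D" "finite L" "finite G"
    unfolding D_def G_def by (auto intro: finite_subset)
  have "folded_coeff (2*r+1) \<mu> z k = sum f S"
    unfolding folded_coeff_def f_def S_def by (rule refl)
  moreover have "sum f S = sum f D + (sum f L + sum f G)"
  proof -
    have "S = D \<union> (L \<union> G)" unfolding D_def L_def G_def S_def by auto
    moreover have "sum f (L \<union> G) = sum f L + sum f G"
      by (rule sum.union_disjoint) (use fin in \<open>auto simp: L_def G_def\<close>)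
    moreover have "sum f (D \<union> (L \<union> G)) = sum f D + sum f (L \<union> G)"
      by (rule sum.union_disjoint) (use fin in \<open>auto simp: D_def L_def G_def\<close>)
    ultimately show ?thesis by simp
  qed
  moreover have "sum f G = sum f L"
  proof -
    have "G = prod.swap ` L" unfolding G_def L_def S_def by (auto simp: image_iff add.commute)
    then show ?thesis
      by (simp add: sum.reindex f_def add.commute mult.commute mult.left_commute)
  qed
  moreover have "sum f D = (\<Sum>i\<in>{i. i \<le> 2*r \<and> (2*i) mod (2*r+1) = k}.
                               fold_weight (2*r+1) \<mu> (2*i) * z i * z i)"
  proof -
    have "D = (\<lambda>i. (i,i)) ` {i. i \<le> 2*r \<and> (2*i) mod (2*r+1) = k}"
      unfolding D_def S_def by (auto simp: image_iff mult_2)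
    then show ?thesis by (simp add: sum.reindex inj_on_def f_def mult_2)
  qed
  moreover have "sum f L = (\<Sum>s\<in>U r k. muc r \<mu> s * (\<Prod>i\<in>s. z i))"
  proof -
    have U_image: "U r k = (\<lambda>(i,j). {i,j}) ` L"
      unfolding L_def by (rule U_eq_increasing_pairs)
    have inj: "inj_on (\<lambda>(i,j). {i,j}) L"
      unfolding inj_on_def L_def by (auto simp: doubleton_eq_iff)
    have weight: "muc r \<mu> {i,j} * (\<Prod>i\<in>{i,j}. z i) = f (i,j)" if "(i,j) \<in> L" for i j
      using that by (auto simp: f_def muc_def fold_weight_def L_def S_def)
    show ?thesis
      unfolding U_image sum.reindex[OF inj] by (rule sum.cong) (auto simp: weight)
  qed
  ultimately show ?thesis by (simp only: mult_2)
qed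

lemma double_mod_preimage:
  fixes r k :: nat
  assumes "k \<le> 2*r"
  shows "{i. i \<le> 2*r \<and> (2*i) mod (2*r+1) = k}
         = {if even k then k div 2 else (k + 2*r + 1) div 2}"
proof -
  define h where "h = (if even k then k div 2 else (k + 2*r + 1) div 2)"
  have "(2*i) mod (2*r+1) = k \<longleftrightarrow> i = h" if "i \<le> 2*r" for i
  proof (cases "2*i < 2*r+1")
    case True
    then show ?thesis using assms that by (auto simp: h_def)
  next
    case False
    then have "(2*i) mod (2*r+1) = 2*i - (2*r+1)"
      using that by (simp add: le_mod_geq)
    then show ?thesis using False assms that by (auto simp: h_def)
  qed
  moreover have "h \<le> 2*r"
    using assms unfolding h_def by presburger
  ultimately show ?thesis
    unfolding h_def[symmetric] by auto
qed

lemma system_imp_folded_coeff_zero: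
  fixes \<mu> :: "'a::field" and z :: "nat \<Rightarrow> 'a"
  assumes odd_eqs: "\<forall>l\<in>{1..r}. \<mu> * (z (l + r))^2
               + 2 * (\<Sum>s\<in>U r (2*l - 1). muc r \<mu> s * (\<Prod>i\<in>s. z i)) = 0"
    and even_eqs: "\<forall>l\<in>{0..r}. (z l)^2
               + 2 * (\<Sum>s\<in>U r (2*l). muc r \<mu> s * (\<Prod>i\<in>s. z i)) = 0"
    and "k < 2*r+1"
  shows "folded_coeff (2*r+1) \<mu> z k = 0"
proof (cases "even k")
  case True
  then obtain l where l: "k = 2*l" by auto
  with assms(3) have "l \<in> {0..r}" by simp
  have "{i. i \<le> 2*r \<and> (2*i) mod (2*r+1) = k} = {l}"
    using double_mod_preimage[of k r] assms(3) l by simp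
  then have "folded_coeff (2*r+1) \<mu> z k = z l * z l + 2 * (\<Sum>s\<in>U r (2*l). muc r \<mu> s * (\<Prod>i\<in>s. z i))"
    using folded_coeff_split[of r \<mu> z k] \<open>l \<in> {0..r}\<close> l by (simp add: fold_weight_def)
  also have "\<dots> = 0"
    using even_eqs \<open>l \<in> {0..r}\<close> by (simp add: power2_eq_square)
  finally show ?thesis .
next
  case False
  define l where "l = (k + 1) div 2"
  have l: "k = 2*l - 1" "1 \<le> l"
    using False by (auto simp: l_def elim!: oddE)
  with assms(3) have "l \<in> {1..r}" by simp
  have "(k + 2*r + 1) div 2 = l + r" using l by simp
  then have "{i. i \<le> 2*r \<and> (2*i) mod (2*r+1) = k} = {l + r}"
    using double_mod_preimage[of k r] assms(3) False by simp
  then have "folded_coeff (2*r+1) \<mu> z k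
             = \<mu> * z (l+r) * z (l+r) + 2 * (\<Sum>s\<in>U r (2*l - 1). muc r \<mu> s * (\<Prod>i\<in>s. z i))"
    using folded_coeff_split[of r \<mu> z k] \<open>l \<in> {1..r}\<close> l by (simp add: fold_weight_def)
  also have "\<dots> = 0"
    using odd_eqs \<open>l \<in> {1..r}\<close> by (simp add: power2_eq_square mult.assoc)
  finally show ?thesis .
qed

lemma system_only_zero:
  fixes \<mu> :: "'a::field" and z :: "nat \<Rightarrow> 'a"
  assumes irr: "irreducible (monom 1 (2*r+1) - [:\<mu>:])"
    and odd_eqs: "\<forall>l\<in>{1..r}. \<mu> * (z (l + r))^2
               + 2 * (\<Sum>s\<in>U r (2*l - 1). muc r \<mu> s * (\<Prod>i\<in>s. z i)) = 0"
    and even_eqs: "\<forall>l\<in>{0..r}. (z l)^2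
               + 2 * (\<Sum>s\<in>U r (2*l). muc r \<mu> s * (\<Prod>i\<in>s. z i)) = 0"
    and "i \<le> 2*r"
  shows "z i = 0"
proof -
  define P where "P = (\<Sum>i<2*r+1. monom (z i) i)"
  have coeff_P: "coeff P i = (if i < 2*r+1 then z i else 0)" for i
    unfolding P_def coeff_sum by (simp add: coeff_monom)
  have "(monom 1 (2*r+1) - [:\<mu>:]) dvd P * P"
    using square_fold_dvd[of "2*r+1" \<mu> z]
      system_imp_folded_coeff_zero[OF odd_eqs even_eqs] by (simp add: P_def)
  moreover have "degree P < degree (monom 1 (2*r+1) - [:\<mu>:] :: 'a poly)"
  proof -
    have "degree P \<le> 2*r" by (rule degree_le) (simp add: coeff_P)
    moreover have "2*r+1 \<le> degree (monom 1 (2*r+1) - [:\<mu>:] :: 'a poly)"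
      by (rule le_degree) simp
    ultimately show ?thesis by simp
  qed
  ultimately have "P = 0" by (rule poly_zero_if_irreducible_dvd_square[OF irr])
  then show ?thesis using coeff_P[of i] assms(4) by simp
qed

theorem lemma3p5:
  fixes \<mu> :: "'a::{field,finite}" and r :: nat
  assumes "\<exists>p k. prime p \<and> odd p \<and> k \<ge> 1 \<and> card (UNIV :: 'a set) = p ^ k"
    and "r \<ge> 1"
    and "irreducible (monom 1 (2*r+1) - [:\<mu>:])"
  shows "real (card {z \<in> {0..2*r} \<rightarrow>\<^sub>E (UNIV :: 'a set).
            (\<forall>l\<in>{1..r}. \<mu> * (z (l + r))^2
               + 2 * (\<Sum>s\<in>U r (2*l - 1). muc r \<mu> s * (\<Prod>i\<in>s. z i)) = 0) \<and>
            (\<forall>l\<in>{0..r}. (z l)^2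
               + 2 * (\<Sum>s\<in>U r (2*l). muc r \<mu> s * (\<Prod>i\<in>s. z i)) = 0)})
         \<le> (2 * real r + 5) / 3 * real (card (UNIV :: 'a set)) powr (4 * real r / 3 + 1)"
  (is "real (card ?Sol) \<le> ?bound")
proof -
  have "?Sol \<subseteq> {\<lambda>i\<in>{0..2*r}. 0}"
    using system_only_zero[OF assms(3)] by (auto simp: PiE_def extensional_def fun_eq_iff)
  then have "real (card ?Sol) \<le> 1"
    using card_mono[of "{\<lambda>i\<in>{0..2*r}. 0}" ?Sol] by simp
  also have "1 \<le> ?bound"
  proof -
    have "1 \<le> real (card (UNIV :: 'a set)) powr (4 * real r / 3 + 1)"
      using card_gt_0_iff[of "UNIV :: 'a set"] by (intro ge_one_powr_ge_zero) auto
    then show ?thesis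
      using mult_mono[of 1 "(2 * real r + 5) / 3" 1] by fastforce
  qed
  finally show ?thesis .
qed

end
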